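(* Let $N,K\ge1$, $\mathbf{g},\mathbf{h}_{r,k}\in\mathbb{C}^N$, $h_{d,k}\in\mathbb{C}$, $\sigma^2,\sigma_r^2,P_r,T_{\max}>0$, $E_k>0$ ($k=1,\dots,K$). Put $\mathbf{q}_k=\mathrm{diag}(\mathbf{g}^H)\mathbf{h}_{r,k}$, $\mathbf{G}=\mathrm{diag}(|[\mathbf{g}]_1|^2,\dots,|[\mathbf{g}]_N|^2)$, $\mathbf{H}_{r,k}=\mathrm{diag}(|[\mathbf{h}_{r,k}]_1|^2,\dots,|[\mathbf{h}_{r,k}]_N|^2)$, and $\gamma_k(\mathbf{v})=|h_{d,k}+\mathbf{v}^H\mathbf{q}_k|^2/(\sigma^2+\sigma_r^2\mathbf{v}^H\mathbf{G}\mathbf{v})$ for $\mathbf{v}\in\mathbb{C}^N$. Let $R^*_{\rm TDMA}$ be the optimal value of: maximize $\sum_k\tau_k\log_2(1+p_k\gamma_k(\mathbf{v}_k))$ over $\tau_k,p_k\in\mathbb{R}$, $\mathbf{v}_k\in\mathbb{C}^N$ ($k=1,\dots,K$), subject to $\tau_kp_k\le E_k$, $\sum_k\tau_k\le T_{\max}$, $\tau_k\ge0$, $p_k\ge0$, $p_k\mathbf{v}_k^H\mathbf{H}_{r,k}\mathbf{v}_k+\sigma_r^2\|\mathbf{v}_k\|^2\le P_r$ for all $k$. Let $R^*_{\rm NOMA}$ be the optimal value of: maximize $\tau\log_2(1+\sum_kp_k\gamma_k(\mathbf{v}))$ over $\tau,p_k\in\mathbb{R}$, $\mathbf{v}\in\mathbb{C}^N$,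 subject to $\tau p_k\le E_k$, $\tau\le T_{\max}$, $\tau\ge0$, $p_k\ge0$, $\sum_kp_k\mathbf{v}^H\mathbf{H}_{r,k}\mathbf{v}+\sigma_r^2\|\mathbf{v}\|^2\le P_r$. Let $(\{\breve p_k\},\breve{\mathbf{v}})$ be the optimal solution of the problem: maximize $\sum_k\tau_k\log_2(1+p_k\gamma_k(\mathbf{v}))$ over $\tau_k,p_k\in\mathbb{R}$ and a single $\mathbf{v}\in\mathbb{C}^N$ subject only to $\tau_kp_k\le E_k$, $\sum_k\tau_k\le T_{\max}$, $\tau_k\ge0$, $p_k\ge0$. If $\breve p_k\breve{\mathbf{v}}^H\mathbf{H}_{r,k}\breve{\mathbf{v}}+\sigma_r^2\|\breve{\mathbf{v}}\|^2\le P_r$ for all $k$, then $R^*_{\rm TDMA}\ge R^*_{\rm NOMA}$.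
   Context: $R^*_{\rm TDMA}$ is the optimal sum throughput of active-IRS-aided TDMA uplink with a dedicated IRS reflection/amplification vector $\mathbf{v}_k$ per device slot; $R^*_{\rm NOMA}$ that of NOMA with one shared IRS vector; $E_k$ is device $k$'s energy and $P_r$ the IRS amplification power budget. *)

theory Defs
  imports Complex_Main
begin

text \<open>Vectors in C^N are functions from a finite index type 'n (with N = CARD('n)).
  Devices are indexed by a finite type 'k (K = CARD('k)).\<close>

definition herm :: "('n::finite \<Rightarrow> complex) \<Rightarrow> ('n \<Rightarrow> complex) \<Rightarrow> complex" where
  "herm v w = (\<Sum>i\<in>UNIV. cnj (v i) * w i)"

definition qvec :: "('n::finite \<Rightarrow> complex) \<Rightarrow> ('n \<Rightarrow> complex) \<Rightarrow> ('n \<Rightarrow> complex)" where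
  "qvec g h = (\<lambda>i. cnj (g i) * h i)"

definition quad_diag :: "('n::finite \<Rightarrow> real) \<Rightarrow> ('n \<Rightarrow> complex) \<Rightarrow> real" where
  "quad_diag d v = (\<Sum>i\<in>UNIV. d i * (cmod (v i))\<^sup>2)"

definition sqmag :: "('n::finite \<Rightarrow> complex) \<Rightarrow> ('n \<Rightarrow> real)" where
  "sqmag x = (\<lambda>i. (cmod (x i))\<^sup>2)"

definition normsq :: "('n::finite \<Rightarrow> complex) \<Rightarrow> real" where
  "normsq v = (\<Sum>i\<in>UNIV. (cmod (v i))\<^sup>2)"

definition gam :: "real \<Rightarrow> real \<Rightarrow> ('n::finite \<Rightarrow> complex) \<Rightarrow> complex \<Rightarrow> ('n \<Rightarrow> complex)
                   \<Rightarrow> ('n \<Rightarrow> complex) \<Rightarrow> real" where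
  "gam \<sigma>2 \<sigma>r2 g hdir hr v =
     (cmod (hdir + herm v (qvec g hr)))\<^sup>2 / (\<sigma>2 + \<sigma>r2 * quad_diag (sqmag g) v)"

definition R_TDMA :: "real \<Rightarrow> real \<Rightarrow> real \<Rightarrow> real \<Rightarrow> ('k::finite \<Rightarrow> real)
   \<Rightarrow> ('n::finite \<Rightarrow> complex) \<Rightarrow> ('k \<Rightarrow> complex) \<Rightarrow> ('k \<Rightarrow> 'n \<Rightarrow> complex) \<Rightarrow> real" where
  "R_TDMA \<sigma>2 \<sigma>r2 Pr Tmax E g hdir hr = Sup
     {(\<Sum>k\<in>UNIV. \<tau> k * log 2 (1 + p k * gam \<sigma>2 \<sigma>r2 g (hdir k) (hr k) (V k))) | \<tau> p V.
        (\<forall>k. \<tau> k * p k \<le> E k \<and> \<tau> k \<ge> 0 \<and> p k \<ge> 0 \<and>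
              p k * quad_diag (sqmag (hr k)) (V k) + \<sigma>r2 * normsq (V k) \<le> Pr) \<and>
        (\<Sum>k\<in>UNIV. \<tau> k) \<le> Tmax}"

definition R_NOMA :: "real \<Rightarrow> real \<Rightarrow> real \<Rightarrow> real \<Rightarrow> ('k::finite \<Rightarrow> real)
   \<Rightarrow> ('n::finite \<Rightarrow> complex) \<Rightarrow> ('k \<Rightarrow> complex) \<Rightarrow> ('k \<Rightarrow> 'n \<Rightarrow> complex) \<Rightarrow> real" where
  "R_NOMA \<sigma>2 \<sigma>r2 Pr Tmax E g hdir hr = Sup
     {\<tau> * log 2 (1 + (\<Sum>k\<in>UNIV. p k * gam \<sigma>2 \<sigma>r2 g (hdir k) (hr k) v)) | \<tau> p v.
        (\<forall>k. \<tau> * p k \<le> E k \<and> p k \<ge> 0) \<and> \<tau> \<le> Tmax \<and> \<tau> \<ge> 0 \<and>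
        (\<Sum>k\<in>UNIV. p k * quad_diag (sqmag (hr k)) v) + \<sigma>r2 * normsq v \<le> Pr}"

definition relax_feasible :: "real \<Rightarrow> ('k::finite \<Rightarrow> real) \<Rightarrow> ('k \<Rightarrow> real) \<Rightarrow> ('k \<Rightarrow> real) \<Rightarrow> bool" where
  "relax_feasible Tmax E \<tau> p \<longleftrightarrow>
     (\<forall>k. \<tau> k * p k \<le> E k \<and> \<tau> k \<ge> 0 \<and> p k \<ge> 0) \<and> (\<Sum>k\<in>UNIV. \<tau> k) \<le> Tmax"

definition relax_obj :: "real \<Rightarrow> real \<Rightarrow> ('n::finite \<Rightarrow> complex) \<Rightarrow> ('k::finite \<Rightarrow> complex)
   \<Rightarrow> ('k \<Rightarrow> 'n \<Rightarrow> complex) \<Rightarrow> ('k \<Rightarrow> real) \<Rightarrow> ('k \<Rightarrow> real) \<Rightarrow> ('n \<Rightarrow> complex) \<Rightarrow> real" where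
  "relax_obj \<sigma>2 \<sigma>r2 g hdir hr \<tau> p v =
     (\<Sum>k\<in>UNIV. \<tau> k * log 2 (1 + p k * gam \<sigma>2 \<sigma>r2 g (hdir k) (hr k) v))"

end

theory Submission
  imports Defs
begin

text \<open>A NOMA point \<open>(\<tau>, p, v)\<close> with total SNR \<open>A = \<Sum>\<^sub>k p\<^sub>k \<gamma>\<^sub>k(v)\<close> is reproduced by time sharing
  with the same IRS vector: device \<open>k\<close> gets the fraction \<open>p\<^sub>k \<gamma>\<^sub>k(v) / A\<close> of the time \<open>\<tau>\<close> and
  transmits with its power scaled up so that its own SNR is \<open>A\<close>. This spends exactly the energy
  \<open>\<tau> p\<^sub>k\<close> and the slot rates add up to \<open>\<tau> log\<^sub>2 (1 + A)\<close>. Hence every NOMA rate is bounded by the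
  optimum of the relaxed problem, which has no IRS power constraint. Under the hypothesis on the
  relaxed optimizer, using \<open>v\<close> in every slot makes it TDMA-feasible, so that optimum is a TDMA
  rate. The supremum defining \<open>R\<^sup>*\<^sub>T\<^sub>D\<^sub>M\<^sub>A\<close> is finite because \<open>log(1 + x) \<le> x\<close> and the IRS power budget
  bounds \<open>\<parallel>v\<^sub>k\<parallel>\<^sup>2\<close> by \<open>P\<^sub>r / \<sigma>\<^sub>r\<^sup>2\<close>.\<close>

lemma quad_diag_sqmag_nonneg: "0 \<le> quad_diag (sqmag x) v"
  unfolding quad_diag_def sqmag_def by (intro sum_nonneg) simp

lemma cmod_le_sqrt_normsq: "cmod (v i) \<le> sqrt (normsq v)"
proof -
  have "(cmod (v i))\<^sup>2 \<le> normsq v"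
    unfolding normsq_def by (rule member_le_sum) auto
  then show ?thesis
    by (simp add: real_le_rsqrt)
qed

lemma cmod_herm_le: "cmod (herm v w) \<le> sqrt (normsq v) * (\<Sum>i\<in>UNIV. cmod (w i))"
proof -
  have "cmod (herm v w) \<le> (\<Sum>i\<in>UNIV. cmod (cnj (v i) * w i))"
    unfolding herm_def by (rule norm_sum)
  also have "\<dots> = (\<Sum>i\<in>UNIV. cmod (v i) * cmod (w i))"
    by (simp add: norm_mult)
  also have "\<dots> \<le> (\<Sum>i\<in>UNIV. sqrt (normsq v) * cmod (w i))"
    by (intro sum_mono mult_right_mono cmod_le_sqrt_normsq) simp
  finally show ?thesis
    by (simp add: sum_distrib_left)
qed

lemma gam_nonneg:
  assumes "\<sigma>2 > 0" "\<sigma>r2 \<ge> 0"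
  shows "0 \<le> gam \<sigma>2 \<sigma>r2 g c h v"
  unfolding gam_def using assms quad_diag_sqmag_nonneg[of g v] by simp

lemma gam_le:
  assumes "\<sigma>2 > 0" "\<sigma>r2 \<ge> 0" "normsq v \<le> B"
  shows "gam \<sigma>2 \<sigma>r2 g c h v \<le> (cmod c + sqrt B * (\<Sum>i\<in>UNIV. cmod (qvec g h i)))\<^sup>2 / \<sigma>2"
proof -
  have "cmod (c + herm v (qvec g h)) \<le> cmod c + sqrt (normsq v) * (\<Sum>i\<in>UNIV. cmod (qvec g h i))"
    using norm_triangle_ineq[of c "herm v (qvec g h)"] cmod_herm_le[of v "qvec g h"] by linarith
  also have "\<dots> \<le> cmod c + sqrt B * (\<Sum>i\<in>UNIV. cmod (qvec g h i))"
    using assms(3) by (intro add_left_mono mult_right_mono sum_nonneg) auto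
  finally have numerator: "(cmod (c + herm v (qvec g h)))\<^sup>2
      \<le> (cmod c + sqrt B * (\<Sum>i\<in>UNIV. cmod (qvec g h i)))\<^sup>2"
    by (rule power_mono) simp
  have "\<sigma>2 \<le> \<sigma>2 + \<sigma>r2 * quad_diag (sqmag g) v"
    using assms(2) quad_diag_sqmag_nonneg[of g v] by simp
  then have "gam \<sigma>2 \<sigma>r2 g c h v \<le> (cmod (c + herm v (qvec g h)))\<^sup>2 / \<sigma>2"
    unfolding gam_def using assms(1) by (intro divide_left_mono) auto
  also have "\<dots> \<le> (cmod c + sqrt B * (\<Sum>i\<in>UNIV. cmod (qvec g h i)))\<^sup>2 / \<sigma>2"
    using numerator assms(1) by (intro divide_right_mono) auto
  finally show ?thesis .
qed

lemma mult_log_one_plus_le: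
  fixes t p x E :: real
  assumes "t \<ge> 0" "p \<ge> 0" "x \<ge> 0" "t * p \<le> E"
  shows "t * log 2 (1 + p * x) \<le> E * x / ln 2"
proof -
  have "t * log 2 (1 + p * x) = t * ln (1 + p * x) / ln 2"
    by (simp add: log_def)
  also have "\<dots> \<le> t * (p * x) / ln 2"
    using assms by (intro divide_right_mono mult_left_mono ln_add_one_self_le_self) auto
  also have "\<dots> \<le> E * x / ln 2"
    using assms by (intro divide_right_mono) (auto simp: mult.assoc[symmetric] intro: mult_right_mono)
  finally show ?thesis .
qed

lemma tdma_rate_le:
  assumes "\<sigma>2 > 0" "\<sigma>r2 > 0"
    and feasible: "\<forall>k. \<tau> k * p k \<le> E k \<and> \<tau> k \<ge> 0 \<and> p k \<ge> 0 \<and>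
                       p k * quad_diag (sqmag (hr k)) (V k) + \<sigma>r2 * normsq (V k) \<le> Pr"
  shows "(\<Sum>k\<in>UNIV. \<tau> k * log 2 (1 + p k * gam \<sigma>2 \<sigma>r2 g (hdir k) (hr k) (V k)))
    \<le> (\<Sum>k\<in>UNIV. E k * ((cmod (hdir k) + sqrt (Pr / \<sigma>r2) * (\<Sum>i\<in>UNIV. cmod (qvec g (hr k) i)))\<^sup>2
                           / \<sigma>2) / ln 2)"
proof (intro sum_mono)
  fix k
  let ?\<gamma> = "gam \<sigma>2 \<sigma>r2 g (hdir k) (hr k) (V k)"
  have "0 \<le> p k * quad_diag (sqmag (hr k)) (V k)"
    using feasible by (simp add: quad_diag_sqmag_nonneg)
  then have "\<sigma>r2 * normsq (V k) \<le> Pr"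
    using feasible[rule_format, of k] by linarith
  then have "normsq (V k) \<le> Pr / \<sigma>r2"
    using assms(2) by (simp add: pos_le_divide_eq mult.commute)
  note \<gamma>_le = gam_le[OF assms(1) less_imp_le[OF assms(2)] this]
  have "0 \<le> E k"
    using feasible by (meson mult_nonneg_nonneg order_trans)
  have "\<tau> k * log 2 (1 + p k * ?\<gamma>) \<le> E k * ?\<gamma> / ln 2"
    using feasible gam_nonneg[OF assms(1) less_imp_le[OF assms(2)]] by (intro mult_log_one_plus_le) auto
  also have "\<dots> \<le> E k * ((cmod (hdir k) + sqrt (Pr / \<sigma>r2) * (\<Sum>i\<in>UNIV. cmod (qvec g (hr k) i)))\<^sup>2
                           / \<sigma>2) / ln 2"
    using \<gamma>_le \<open>0 \<le> E k\<close> by (intro divide_right_mono mult_left_mono) auto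
  finally show "\<tau> k * log 2 (1 + p k * ?\<gamma>) \<le> \<dots>" .
qed

lemma relax_obj_le_R_TDMA:
  assumes "\<sigma>2 > 0" "\<sigma>r2 > 0"
    and "relax_feasible Tmax E \<tau> p"
    and "\<forall>k. p k * quad_diag (sqmag (hr k)) v + \<sigma>r2 * normsq v \<le> Pr"
  shows "relax_obj \<sigma>2 \<sigma>r2 g hdir hr \<tau> p v \<le> R_TDMA \<sigma>2 \<sigma>r2 Pr Tmax E g hdir hr"
proof -
  let ?rates = "{(\<Sum>k\<in>UNIV. \<tau> k * log 2 (1 + p k * gam \<sigma>2 \<sigma>r2 g (hdir k) (hr k) (V k))) | \<tau> p V.
        (\<forall>k. \<tau> k * p k \<le> E k \<and> \<tau> k \<ge> 0 \<and> p k \<ge> 0 \<and>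
              p k * quad_diag (sqmag (hr k)) (V k) + \<sigma>r2 * normsq (V k) \<le> Pr) \<and>
        (\<Sum>k\<in>UNIV. \<tau> k) \<le> Tmax}"
  have "relax_obj \<sigma>2 \<sigma>r2 g hdir hr \<tau> p v \<in> ?rates"
    using assms(3,4) unfolding relax_obj_def relax_feasible_def
    by (intro CollectI exI[of _ \<tau>] exI[of _ p] exI[of _ "\<lambda>_. v"]) auto
  moreover have "bdd_above ?rates"
    using tdma_rate_le[OF assms(1,2)] by (intro bdd_aboveI) blast
  ultimately show ?thesis
    unfolding R_TDMA_def by (rule cSup_upper)
qed

lemma noma_rate_achieved_by_time_sharing:
  assumes "\<sigma>2 > 0" "\<sigma>r2 \<ge> 0"
    and "0 \<le> \<tau>" "\<tau> \<le> Tmax" "\<forall>k. \<tau> * p k \<le> E k \<and> p k \<ge> 0"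
  shows "\<exists>t q. relax_feasible Tmax E t q \<and>
    relax_obj \<sigma>2 \<sigma>r2 g hdir hr t q v = \<tau> * log 2 (1 + (\<Sum>k\<in>UNIV. p k * gam \<sigma>2 \<sigma>r2 g (hdir k) (hr k) v))"
proof -
  define \<gamma> where "\<gamma> k = gam \<sigma>2 \<sigma>r2 g (hdir k) (hr k) v" for k
  define a where "a k = p k * \<gamma> k" for k
  define A where "A = (\<Sum>k\<in>UNIV. a k)"
  define t where "t k = \<tau> * a k / A" for k
    \<comment> \<open>for \<open>A = 0\<close> this is the all-idle schedule \<open>t = 0\<close>, since \<open>x / 0 = 0\<close>\<close>
  define q where "q k = (if a k = 0 then 0 else A / \<gamma> k)" for k
  have "0 \<le> \<gamma> k" for k
    unfolding \<gamma>_def using assms(1,2) by (rule gam_nonneg)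
  then have "0 \<le> a k" for k
    unfolding a_def using assms(5) by simp
  then have "0 \<le> A"
    unfolding A_def by (simp add: sum_nonneg)
  have A_pos: "0 < A" if "a k \<noteq> 0" for k
  proof -
    have "a k \<le> A"
      unfolding A_def using \<open>\<And>k. 0 \<le> a k\<close> by (intro member_le_sum) auto
    then show ?thesis
      using \<open>0 \<le> a k\<close> that by linarith
  qed
  have tq: "t k * q k = (if a k = 0 then 0 else \<tau> * p k)"
    and snr: "q k * \<gamma> k = (if a k = 0 then 0 else A)" for k
    using A_pos[of k] unfolding t_def q_def a_def by (auto simp: field_simps)
  have sum_t: "(\<Sum>k\<in>UNIV. t k) = (if A = 0 then 0 else \<tau>)"
    unfolding t_def A_def by (simp add: sum_divide_distrib[symmetric] sum_distrib_left[symmetric])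
  have "relax_feasible Tmax E t q"
    unfolding relax_feasible_def
  proof (intro conjI allI)
    fix k
    show "t k * q k \<le> E k"
      using tq[of k] assms(3,5) by (auto intro: order_trans[OF mult_nonneg_nonneg])
    show "0 \<le> t k"
      unfolding t_def using assms(3) \<open>0 \<le> a k\<close> \<open>0 \<le> A\<close> by simp
    show "0 \<le> q k"
      unfolding q_def using \<open>0 \<le> \<gamma> k\<close> \<open>0 \<le> A\<close> by simp
  next
    show "(\<Sum>k\<in>UNIV. t k) \<le> Tmax"
      using sum_t assms(3,4) by simp
  qed
  moreover have "relax_obj \<sigma>2 \<sigma>r2 g hdir hr t q v = (\<Sum>k\<in>UNIV. t k) * log 2 (1 + A)"
    unfolding relax_obj_def sum_distrib_right
    by (intro sum.cong) (auto simp: snr[unfolded \<gamma>_def] t_def)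
  moreover have "(\<Sum>k\<in>UNIV. t k) * log 2 (1 + A) = \<tau> * log 2 (1 + A)"
    using sum_t by simp
  ultimately show ?thesis
    unfolding A_def a_def \<gamma>_def by metis
qed

lemma R_NOMA_le_relax_max:
  assumes "\<sigma>2 > 0" "\<sigma>r2 \<ge> 0" "Pr \<ge> 0" "Tmax \<ge> 0" "\<forall>k. E k \<ge> 0"
    and relax_max: "\<forall>\<tau> p v. relax_feasible Tmax E \<tau> p \<longrightarrow>
                     relax_obj \<sigma>2 \<sigma>r2 g hdir hr \<tau> p v \<le> M"
  shows "R_NOMA \<sigma>2 \<sigma>r2 Pr Tmax E g hdir hr \<le> M"
proof -
  let ?rates = "{\<tau> * log 2 (1 + (\<Sum>k\<in>UNIV. p k * gam \<sigma>2 \<sigma>r2 g (hdir k) (hr k) v)) | \<tau> p v.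
        (\<forall>k. \<tau> * p k \<le> E k \<and> p k \<ge> 0) \<and> \<tau> \<le> Tmax \<and> \<tau> \<ge> 0 \<and>
        (\<Sum>k\<in>UNIV. p k * quad_diag (sqmag (hr k)) v) + \<sigma>r2 * normsq v \<le> Pr}"
  have "0 * log 2 (1 + (\<Sum>k\<in>UNIV. 0 * gam \<sigma>2 \<sigma>r2 g (hdir k) (hr k) (\<lambda>_. 0))) \<in> ?rates"
    using assms(3-5) by (intro CollectI exI[of _ 0] exI[of _ "\<lambda>_. 0"]) (auto simp: normsq_def)
  then have "?rates \<noteq> {}"
    by blast
  moreover have "x \<le> M" if "x \<in> ?rates" for x
  proof -
    obtain \<tau> p v where x: "x = \<tau> * log 2 (1 + (\<Sum>k\<in>UNIV. p k * gam \<sigma>2 \<sigma>r2 g (hdir k) (hr k) v))"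
      and feasible: "0 \<le> \<tau>" "\<tau> \<le> Tmax" "\<forall>k. \<tau> * p k \<le> E k \<and> p k \<ge> 0"
      using \<open>x \<in> ?rates\<close> by blast
    obtain t q where "relax_feasible Tmax E t q" "relax_obj \<sigma>2 \<sigma>r2 g hdir hr t q v = x"
      using noma_rate_achieved_by_time_sharing[OF assms(1,2) feasible, of g hdir hr v] unfolding x by blast
    then show "x \<le> M"
      using relax_max by blast
  qed
  ultimately show ?thesis
    unfolding R_NOMA_def by (rule cSup_least)
qed

theorem theorem1:
  fixes g :: "'n::finite \<Rightarrow> complex" and hr :: "'k::finite \<Rightarrow> 'n \<Rightarrow> complex"
    and hdir :: "'k \<Rightarrow> complex" and E :: "'k \<Rightarrow> real"
    and \<sigma>2 \<sigma>r2 Pr Tmax :: real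
    and \<tau>b pb :: "'k \<Rightarrow> real" and vb :: "'n \<Rightarrow> complex"
  assumes "\<sigma>2 > 0" "\<sigma>r2 > 0" "Pr > 0" "Tmax > 0" "\<forall>k. E k > 0"
    and opt_feas: "relax_feasible Tmax E \<tau>b pb"
    and opt_max: "\<forall>\<tau> p v. relax_feasible Tmax E \<tau> p \<longrightarrow>
                     relax_obj \<sigma>2 \<sigma>r2 g hdir hr \<tau> p v \<le> relax_obj \<sigma>2 \<sigma>r2 g hdir hr \<tau>b pb vb"
    and pow: "\<forall>k. pb k * quad_diag (sqmag (hr k)) vb + \<sigma>r2 * normsq vb \<le> Pr"
  shows "R_TDMA \<sigma>2 \<sigma>r2 Pr Tmax E g hdir hr \<ge> R_NOMA \<sigma>2 \<sigma>r2 Pr Tmax E g hdir hr"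
proof -
  have "R_NOMA \<sigma>2 \<sigma>r2 Pr Tmax E g hdir hr \<le> relax_obj \<sigma>2 \<sigma>r2 g hdir hr \<tau>b pb vb"
    using assms(1-5) opt_max by (intro R_NOMA_le_relax_max) (auto simp: less_imp_le)
  also have "\<dots> \<le> R_TDMA \<sigma>2 \<sigma>r2 Pr Tmax E g hdir hr"
    using assms(1,2) opt_feas pow by (rule relax_obj_le_R_TDMA)
  finally show ?thesis .
qed

end
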